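(* Let $\mathbf S=\langle S,+,0,\mathscr F\rangle$ be a semilattice with operators, and for $\theta\in\operatorname{Con}\mathbf S$ let $\eta(\theta)$ and $\tau(\theta)$ denote respectively the least and greatest congruences of $\mathbf S$ having the same $0$-class as $\theta$. If congruences $\zeta,\gamma,\chi\in\operatorname{Con}\mathbf S$ satisfy $\eta(\zeta)\le\eta(\gamma)$ and $\tau(\chi)\le\tau(\gamma)$, then \[ \eta\big(\eta(\zeta)\vee\tau(\zeta\wedge\chi)\big)\le\eta(\gamma). \]
   Context: A semilattice with operators is a join semilattice $(S,+)$ with least element $0$ together with a set $\mathscr F$ of unary maps preserving $+$ and $0$; congruences are equivalence relations compatible with $+$ and all $f\in\mathscr F$. If $I$ is the $0$-class of $\theta$, then $x\,\eta(\theta)\,y$ iff $x+i=y+i$ for some $i\in I$, and $x\,\tau(\theta)\,y$ iff for every $h$ in the monoid generated by $\mathscr F$ (including the identity), $h(x)\in I\Leftrightarrow h(y)\in I$. *)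

theory Defs
  imports Main
begin

text \<open>A semilattice with operators: the ambient type is the join semilattice
  (join = sup, least element = bot); F is the set of operators.\<close>

definition is_operator :: "('a::bounded_semilattice_sup_bot \<Rightarrow> 'a) \<Rightarrow> bool" where
  "is_operator f \<longleftrightarrow> (\<forall>x y. f (sup x y) = sup (f x) (f y)) \<and> f bot = bot"

definition sl_cong :: "('a::bounded_semilattice_sup_bot \<Rightarrow> 'a) set \<Rightarrow> 'a rel \<Rightarrow> bool" where
  "sl_cong F \<theta> \<longleftrightarrow> equiv UNIV \<theta>
     \<and> (\<forall>x y u v. (x, y) \<in> \<theta> \<and> (u, v) \<in> \<theta> \<longrightarrow> (sup x u, sup y v) \<in> \<theta>)
     \<and> (\<forall>f\<in>F. \<forall>x y. (x, y) \<in> \<theta> \<longrightarrow> (f x, f y) \<in> \<theta>)"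

definition zero_class :: "'a::bounded_semilattice_sup_bot rel \<Rightarrow> 'a set" where
  "zero_class \<theta> = {x. (x, bot) \<in> \<theta>}"

definition eta :: "('a::bounded_semilattice_sup_bot \<Rightarrow> 'a) set \<Rightarrow> 'a rel \<Rightarrow> 'a rel" where
  "eta F \<theta> = (LEAST \<phi>. sl_cong F \<phi> \<and> zero_class \<phi> = zero_class \<theta>)"

definition tau :: "('a::bounded_semilattice_sup_bot \<Rightarrow> 'a) set \<Rightarrow> 'a rel \<Rightarrow> 'a rel" where
  "tau F \<theta> = (GREATEST \<phi>. sl_cong F \<phi> \<and> zero_class \<phi> = zero_class \<theta>)"

definition cong_join :: "('a::bounded_semilattice_sup_bot \<Rightarrow> 'a) set \<Rightarrow> 'a rel \<Rightarrow> 'a rel \<Rightarrow> 'a rel" where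
  "cong_join F \<alpha> \<beta> = \<Inter>{\<phi>. sl_cong F \<phi> \<and> \<alpha> \<union> \<beta> \<subseteq> \<phi>}"

end

theory Submission
  imports Defs
begin

text \<open>The 0-class \<open>I\<close> of any congruence is an ideal closed under the operators, and
  \<open>\<eta>(\<theta>)\<close>, \<open>\<tau>(\<theta>)\<close> depend only on \<open>I\<close>. The hypotheses say \<open>I\<^sub>\<zeta> \<subseteq> I\<^sub>\<gamma>\<close> and
  \<open>\<tau>(I\<^sub>\<chi>) \<subseteq> \<tau>(I\<^sub>\<gamma>)\<close>. Since \<open>\<eta>\<close> is monotone in the 0-class, it suffices to show that
  every \<open>y\<close> in the 0-class of \<open>\<eta>(\<zeta>) \<or> \<tau>(\<zeta> \<and> \<chi>)\<close> lies in \<open>I\<^sub>\<gamma>\<close>. Following a chain of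
  \<open>\<eta>(\<zeta>)\<close>- and \<open>\<tau>(\<zeta> \<and> \<chi>)\<close>-steps from \<open>0\<close> to \<open>y\<close>, one keeps an upper bound \<open>u \<in> I\<^sub>\<gamma>\<close> of
  the current element none of whose images \<open>h(u)\<close> lies in \<open>I\<^sub>\<chi> - I\<^sub>\<zeta>\<close>; in a \<open>\<tau>\<close>-step
  this property makes \<open>u\<close> and the new bound \<open>\<tau>(\<chi>)\<close>-related, hence \<open>\<tau>(\<gamma>)\<close>-related, which
  keeps the new bound in \<open>I\<^sub>\<gamma>\<close>.\<close>

inductive_set op_monoid :: "('a \<Rightarrow> 'a) set \<Rightarrow> ('a \<Rightarrow> 'a) set" for F where
  op_monoid_id: "id \<in> op_monoid F"
| op_monoid_step: "h \<in> op_monoid F \<Longrightarrow> f \<in> F \<Longrightarrow> h \<circ> f \<in> op_monoid F"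

lemma is_operator_mono:
  fixes h :: "'a::bounded_semilattice_sup_bot \<Rightarrow> 'a"
  assumes "is_operator h" "x \<le> y"
  shows "h x \<le> h y"
  using assms unfolding is_operator_def by (metis sup.absorb_iff2 sup.cobounded1)

lemma sl_congI:
  assumes "\<And>x. (x, x) \<in> \<theta>" "\<And>x y. (x, y) \<in> \<theta> \<Longrightarrow> (y, x) \<in> \<theta>"
    "\<And>x y z. (x, y) \<in> \<theta> \<Longrightarrow> (y, z) \<in> \<theta> \<Longrightarrow> (x, z) \<in> \<theta>"
    "\<And>x y u v. (x, y) \<in> \<theta> \<Longrightarrow> (u, v) \<in> \<theta> \<Longrightarrow> (sup x u, sup y v) \<in> \<theta>"
    "\<And>f x y. f \<in> F \<Longrightarrow> (x, y) \<in> \<theta> \<Longrightarrow> (f x, f y) \<in> \<theta>"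
  shows "sl_cong F \<theta>"
proof -
  have "equiv UNIV \<theta>"
    by (rule equivI) (auto simp: refl_on_def sym_def intro: transI assms(1-3))
  then show ?thesis unfolding sl_cong_def using assms(4,5) by blast
qed

context
  fixes F :: "('a::bounded_semilattice_sup_bot \<Rightarrow> 'a) set" and \<theta> :: "'a rel"
  assumes cong: "sl_cong F \<theta>"
begin

lemma sl_cong_refl: "(x, x) \<in> \<theta>"
  using cong unfolding sl_cong_def equiv_def refl_on_def by blast

lemma sl_cong_sym: "(x, y) \<in> \<theta> \<Longrightarrow> (y, x) \<in> \<theta>"
  using cong unfolding sl_cong_def equiv_def sym_def by blast

lemma sl_cong_trans: "(x, y) \<in> \<theta> \<Longrightarrow> (y, z) \<in> \<theta> \<Longrightarrow> (x, z) \<in> \<theta>"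
  using cong unfolding sl_cong_def equiv_def trans_def by blast

lemma sl_cong_sup: "(x, y) \<in> \<theta> \<Longrightarrow> (u, v) \<in> \<theta> \<Longrightarrow> (sup x u, sup y v) \<in> \<theta>"
  using cong unfolding sl_cong_def by blast

lemma sl_cong_op_monoid: "h \<in> op_monoid F \<Longrightarrow> (x, y) \<in> \<theta> \<Longrightarrow> (h x, h y) \<in> \<theta>"
proof (induction h arbitrary: x y rule: op_monoid.induct)
  case (op_monoid_step h f)
  then show ?case using cong unfolding sl_cong_def by simp
qed simp

end

lemma sl_cong_Inter: "(\<And>\<phi>. \<phi> \<in> S \<Longrightarrow> sl_cong F \<phi>) \<Longrightarrow> sl_cong F (\<Inter>S)"
  by (rule sl_congI; meson InterD InterI sl_cong_refl sl_cong_sym sl_cong_trans sl_cong_sup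
      sl_cong_def)

lemma sl_cong_cong_join: "sl_cong F (cong_join F \<alpha> \<beta>)"
  unfolding cong_join_def by (rule sl_cong_Inter) blast

lemma sl_cong_rtrancl_Un:
  assumes "sl_cong F A" "sl_cong F B"
  shows "sl_cong F ((A \<union> B)\<^sup>*)"
proof -
  let ?R = "A \<union> B"
  have step_sup: "(sup x u, sup y u) \<in> ?R" "(sup u x, sup u y) \<in> ?R" if "(x, y) \<in> ?R" for x y u
    using that assms sl_cong_sup sl_cong_refl by blast+
  have sup_left: "(sup x u, sup y u) \<in> ?R\<^sup>*" if "(x, y) \<in> ?R\<^sup>*" for x y u
    using that by (induction rule: rtrancl_induct) (simp, meson rtrancl_into_rtrancl step_sup)+
  have sup_right: "(sup u x, sup u y) \<in> ?R\<^sup>*" if "(x, y) \<in> ?R\<^sup>*" for x y u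
    using that by (induction rule: rtrancl_induct) (simp, meson rtrancl_into_rtrancl step_sup)+
  show ?thesis
  proof (rule sl_congI)
    show "(y, x) \<in> ?R\<^sup>*" if "(x, y) \<in> ?R\<^sup>*" for x y
      using that by (induction rule: rtrancl_induct)
        (auto intro: converse_rtrancl_into_rtrancl sl_cong_sym assms)
    show "(sup x u, sup y v) \<in> ?R\<^sup>*" if "(x, y) \<in> ?R\<^sup>*" "(u, v) \<in> ?R\<^sup>*" for x y u v
      using sup_left[OF that(1), of u] sup_right[OF that(2), of y] by simp
    show "(f x, f y) \<in> ?R\<^sup>*" if "f \<in> F" "(x, y) \<in> ?R\<^sup>*" for f x y
      using that(2) by (induction rule: rtrancl_induct)
        (use that(1) assms in \<open>auto intro: rtrancl_into_rtrancl simp: sl_cong_def\<close>)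
  qed simp_all
qed

lemma cong_join_subset_rtrancl:
  "sl_cong F A \<Longrightarrow> sl_cong F B \<Longrightarrow> cong_join F A B \<subseteq> (A \<union> B)\<^sup>*"
  unfolding cong_join_def using sl_cong_rtrancl_Un by blast

definition op_ideal :: "('a::bounded_semilattice_sup_bot \<Rightarrow> 'a) set \<Rightarrow> 'a set \<Rightarrow> bool" where
  "op_ideal F I \<longleftrightarrow> bot \<in> I \<and> (\<forall>x y. x \<le> y \<longrightarrow> y \<in> I \<longrightarrow> x \<in> I)
     \<and> (\<forall>x\<in>I. \<forall>y\<in>I. sup x y \<in> I) \<and> (\<forall>f\<in>F. f ` I \<subseteq> I)"

lemma op_idealI:
  assumes "bot \<in> I" "\<And>x y. x \<le> y \<Longrightarrow> y \<in> I \<Longrightarrow> x \<in> I"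
    "\<And>x y. x \<in> I \<Longrightarrow> y \<in> I \<Longrightarrow> sup x y \<in> I" "\<And>f x. f \<in> F \<Longrightarrow> x \<in> I \<Longrightarrow> f x \<in> I"
  shows "op_ideal F I"
  unfolding op_ideal_def image_subset_iff using assms by simp

context
  fixes F :: "('a::bounded_semilattice_sup_bot \<Rightarrow> 'a) set" and I :: "'a set"
  assumes ideal: "op_ideal F I"
begin

lemma op_ideal_bot: "bot \<in> I"
  using ideal unfolding op_ideal_def by blast

lemma op_ideal_down: "x \<le> y \<Longrightarrow> y \<in> I \<Longrightarrow> x \<in> I"
  using ideal unfolding op_ideal_def by blast

lemma op_ideal_image: "f \<in> F \<Longrightarrow> x \<in> I \<Longrightarrow> f x \<in> I"
  using ideal unfolding op_ideal_def by blast

lemma op_ideal_sup_iff: "sup x y \<in> I \<longleftrightarrow> x \<in> I \<and> y \<in> I"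
  using ideal unfolding op_ideal_def by (meson sup.cobounded1 sup.cobounded2)

lemma op_ideal_op_monoid: "h \<in> op_monoid F \<Longrightarrow> x \<in> I \<Longrightarrow> h x \<in> I"
  by (induction h arbitrary: x rule: op_monoid.induct)
    (use ideal in \<open>auto simp: op_ideal_def image_subset_iff\<close>)

end

lemma op_ideal_Int: "op_ideal F I \<Longrightarrow> op_ideal F J \<Longrightarrow> op_ideal F (I \<inter> J)"
  unfolding op_ideal_def by (auto simp: image_subset_iff)

lemma zero_class_Int: "zero_class (\<theta> \<inter> \<phi>) = zero_class \<theta> \<inter> zero_class \<phi>"
  unfolding zero_class_def by blast

text \<open>The explicit descriptions of \<open>\<eta>\<close> and \<open>\<tau>\<close> from the paper, as functions of the 0-class.\<close>

definition eta_of :: "'a::bounded_semilattice_sup_bot set \<Rightarrow> 'a rel" where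
  "eta_of I = {(x, y). \<exists>i\<in>I. sup x i = sup y i}"

definition tau_of :: "('a::bounded_semilattice_sup_bot \<Rightarrow> 'a) set \<Rightarrow> 'a set \<Rightarrow> 'a rel" where
  "tau_of F I = {(x, y). \<forall>h\<in>op_monoid F. h x \<in> I \<longleftrightarrow> h y \<in> I}"

lemma eta_of_mono: "I \<subseteq> J \<Longrightarrow> eta_of I \<subseteq> eta_of J"
  unfolding eta_of_def by blast

lemma zero_class_eta_of:
  assumes ideal: "op_ideal F I"
  shows "zero_class (eta_of I) = I"
proof -
  have "(\<exists>i\<in>I. sup x i = sup bot i) \<longleftrightarrow> x \<in> I" for x
    using op_ideal_down[OF ideal, of x] by (metis sup.absorb_iff2 sup.idem sup_bot_left)
  then show ?thesis unfolding zero_class_def eta_of_def by blast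
qed

lemma eta_of_least: "sl_cong F \<phi> \<Longrightarrow> eta_of (zero_class \<phi>) \<subseteq> \<phi>"
proof clarify
  fix x y assume cong: "sl_cong F \<phi>" and "(x, y) \<in> eta_of (zero_class \<phi>)"
  then obtain i where i: "(i, bot) \<in> \<phi>" "sup x i = sup y i"
    by (auto simp: eta_of_def zero_class_def)
  have "(sup x i, x) \<in> \<phi>" "(sup y i, y) \<in> \<phi>"
    using sl_cong_sup[OF cong sl_cong_refl[OF cong] i(1)] by auto
  then have "(x, sup y i) \<in> \<phi>" "(sup y i, y) \<in> \<phi>"
    using i(2) sl_cong_sym[OF cong] by auto
  then show "(x, y) \<in> \<phi>"
    by (rule sl_cong_trans[OF cong])
qed

lemma tau_of_greatest:
  assumes cong: "sl_cong F \<phi>"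
  shows "\<phi> \<subseteq> tau_of F (zero_class \<phi>)"
proof clarify
  fix x y assume "(x, y) \<in> \<phi>"
  then have "(h x, h y) \<in> \<phi>" "(h y, h x) \<in> \<phi>" if "h \<in> op_monoid F" for h
    using that sl_cong_op_monoid[OF cong] sl_cong_sym[OF cong] by blast+
  then have "h x \<in> zero_class \<phi> \<longleftrightarrow> h y \<in> zero_class \<phi>" if "h \<in> op_monoid F" for h
    using that sl_cong_trans[OF cong] unfolding zero_class_def by blast
  then show "(x, y) \<in> tau_of F (zero_class \<phi>)"
    unfolding tau_of_def by blast
qed

locale semilattice_with_operators =
  fixes F :: "('a::bounded_semilattice_sup_bot \<Rightarrow> 'a) set"
  assumes operators: "\<forall>f\<in>F. is_operator f"
begin

lemma op_monoid_is_operator: "h \<in> op_monoid F \<Longrightarrow> is_operator h"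
  by (induction h rule: op_monoid.induct) (use operators in \<open>auto simp: is_operator_def\<close>)

lemma zero_class_op_ideal:
  assumes cong: "sl_cong F \<theta>"
  shows "op_ideal F (zero_class \<theta>)"
  unfolding zero_class_def
proof (rule op_idealI; unfold mem_Collect_eq)
  show "(bot, bot) \<in> \<theta>" by (rule sl_cong_refl[OF cong])
  show "(x, bot) \<in> \<theta>" if "x \<le> y" "(y, bot) \<in> \<theta>" for x y
  proof -
    have "(y, x) \<in> \<theta>"
      using sl_cong_sup[OF cong sl_cong_refl[OF cong] that(2), of x] that(1)
      by (simp add: sup.absorb2)
    then show ?thesis using that(2) sl_cong_sym[OF cong] sl_cong_trans[OF cong] by blast
  qed
  show "(sup x y, bot) \<in> \<theta>" if "(x, bot) \<in> \<theta>" "(y, bot) \<in> \<theta>" for x y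
    using sl_cong_sup[OF cong that] by simp
  show "(f x, bot) \<in> \<theta>" if "f \<in> F" "(x, bot) \<in> \<theta>" for f x
  proof -
    have "(f x, f bot) \<in> \<theta>" using that cong unfolding sl_cong_def by blast
    moreover have "f bot = bot" using that(1) operators unfolding is_operator_def by blast
    ultimately show ?thesis by simp
  qed
qed

lemma sl_cong_eta_of:
  assumes ideal: "op_ideal F I"
  shows "sl_cong F (eta_of I)"
proof (rule sl_congI)
  show "(x, x) \<in> eta_of I" for x
    using op_ideal_bot[OF ideal] unfolding eta_of_def by blast
  show "(y, x) \<in> eta_of I" if rel: "(x, y) \<in> eta_of I" for x y
  proof -
    obtain i where "i \<in> I" "sup x i = sup y i" using rel unfolding eta_of_def by blast
    then show ?thesis unfolding eta_of_def by (auto intro!: bexI[of _ i])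
  qed
  show "(x, z) \<in> eta_of I" if rel: "(x, y) \<in> eta_of I" "(y, z) \<in> eta_of I" for x y z
  proof -
    obtain i j where ij: "i \<in> I" "j \<in> I" "sup x i = sup y i" "sup y j = sup z j"
      using rel unfolding eta_of_def by blast
    have "sup x (sup i j) = sup (sup y i) j" by (simp add: ij(3) flip: sup_assoc)
    also have "\<dots> = sup (sup y j) i" by (simp add: ac_simps)
    also have "\<dots> = sup (sup z j) i" by (simp only: ij(4))
    also have "\<dots> = sup z (sup i j)" by (simp add: ac_simps)
    finally have "sup x (sup i j) = sup z (sup i j)" .
    moreover have "sup i j \<in> I" using op_ideal_sup_iff[OF ideal] ij(1,2) by blast
    ultimately show ?thesis unfolding eta_of_def by blast
  qed
  show "(sup x u, sup y v) \<in> eta_of I" if rel: "(x, y) \<in> eta_of I" "(u, v) \<in> eta_of I" for x y u v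
  proof -
    obtain i j where ij: "i \<in> I" "j \<in> I" "sup x i = sup y i" "sup u j = sup v j"
      using rel unfolding eta_of_def by blast
    have "sup (sup x u) (sup i j) = sup (sup x i) (sup u j)" by (simp add: ac_simps)
    also have "\<dots> = sup (sup y i) (sup v j)" by (simp only: ij(3,4))
    also have "\<dots> = sup (sup y v) (sup i j)" by (simp add: ac_simps)
    finally have "sup (sup x u) (sup i j) = sup (sup y v) (sup i j)" .
    moreover have "sup i j \<in> I" using op_ideal_sup_iff[OF ideal] ij(1,2) by blast
    ultimately show ?thesis unfolding eta_of_def by blast
  qed
  show "(f x, f y) \<in> eta_of I" if f: "f \<in> F" and rel: "(x, y) \<in> eta_of I" for f x y
  proof -
    obtain i where i: "i \<in> I" "sup x i = sup y i" using rel unfolding eta_of_def by blast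
    have hom: "f (sup a b) = sup (f a) (f b)" for a b
      using f operators unfolding is_operator_def by blast
    have "sup (f x) (f i) = sup (f y) (f i)"
      using arg_cong[OF i(2), of f] by (simp only: hom)
    moreover have "f i \<in> I" using op_ideal_image[OF ideal f i(1)] .
    ultimately show ?thesis unfolding eta_of_def by blast
  qed
qed

lemma sl_cong_tau_of:
  assumes ideal: "op_ideal F I"
  shows "sl_cong F (tau_of F I)"
proof (rule sl_congI)
  show "(sup x u, sup y v) \<in> tau_of F I" if "(x, y) \<in> tau_of F I" "(u, v) \<in> tau_of F I"
    for x y u v
  proof -
    have "h (sup x u) \<in> I \<longleftrightarrow> h (sup y v) \<in> I" if h: "h \<in> op_monoid F" for h
    proof -
      have "h x \<in> I \<longleftrightarrow> h y \<in> I" "h u \<in> I \<longleftrightarrow> h v \<in> I"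
        using h \<open>(x, y) \<in> tau_of F I\<close> \<open>(u, v) \<in> tau_of F I\<close> unfolding tau_of_def by auto
      moreover have "h (sup x u) = sup (h x) (h u)" "h (sup y v) = sup (h y) (h v)"
        using op_monoid_is_operator[OF h] unfolding is_operator_def by blast+
      ultimately show ?thesis by (simp add: op_ideal_sup_iff[OF ideal])
    qed
    then show ?thesis unfolding tau_of_def by blast
  qed
  show "(f x, f y) \<in> tau_of F I" if f: "f \<in> F" and rel: "(x, y) \<in> tau_of F I" for f x y
  proof -
    have "(h \<circ> f) x \<in> I \<longleftrightarrow> (h \<circ> f) y \<in> I" if "h \<in> op_monoid F" for h
      using rel op_monoid_step[OF that f] unfolding tau_of_def by blast
    then show ?thesis unfolding tau_of_def by simp
  qed
qed (unfold tau_of_def; simp)+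

lemma zero_class_tau_of:
  assumes ideal: "op_ideal F I"
  shows "zero_class (tau_of F I) = I"
proof -
  have "h bot = bot" if "h \<in> op_monoid F" for h
    using op_monoid_is_operator[OF that] by (simp add: is_operator_def)
  then show ?thesis
    using op_monoid_id[of F] op_ideal_bot[OF ideal] op_ideal_op_monoid[OF ideal]
    unfolding zero_class_def tau_of_def by fastforce
qed

lemma eta_eq_eta_of:
  assumes cong: "sl_cong F \<theta>"
  shows "eta F \<theta> = eta_of (zero_class \<theta>)"
  unfolding eta_def
proof (rule Least_equality)
  have ideal: "op_ideal F (zero_class \<theta>)" by (rule zero_class_op_ideal[OF cong])
  show "sl_cong F (eta_of (zero_class \<theta>)) \<and> zero_class (eta_of (zero_class \<theta>)) = zero_class \<theta>"
    using sl_cong_eta_of[OF ideal] zero_class_eta_of[OF ideal] by simp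
  show "eta_of (zero_class \<theta>) \<le> \<phi>" if "sl_cong F \<phi> \<and> zero_class \<phi> = zero_class \<theta>" for \<phi>
    using that eta_of_least[of F \<phi>] by simp
qed

lemma tau_eq_tau_of:
  assumes cong: "sl_cong F \<theta>"
  shows "tau F \<theta> = tau_of F (zero_class \<theta>)"
  unfolding tau_def
proof (rule Greatest_equality)
  have ideal: "op_ideal F (zero_class \<theta>)" by (rule zero_class_op_ideal[OF cong])
  show "sl_cong F (tau_of F (zero_class \<theta>)) \<and> zero_class (tau_of F (zero_class \<theta>)) = zero_class \<theta>"
    using sl_cong_tau_of[OF ideal] zero_class_tau_of[OF ideal] by simp
  show "\<phi> \<le> tau_of F (zero_class \<theta>)" if "sl_cong F \<phi> \<and> zero_class \<phi> = zero_class \<theta>" for \<phi>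
    using that tau_of_greatest[of F \<phi>] by simp
qed

text \<open>The bounds kept along a chain from \<open>0\<close>: elements of \<open>K\<close> none of whose images lies in
  \<open>J - I\<close>. In the application \<open>I\<close>, \<open>J\<close>, \<open>K\<close> are the 0-classes of \<open>\<zeta>\<close>, \<open>\<chi>\<close>, \<open>\<gamma>\<close>.\<close>

definition chain_bounds :: "'a set \<Rightarrow> 'a set \<Rightarrow> 'a set \<Rightarrow> 'a set" where
  "chain_bounds I J K = {u \<in> K. \<forall>h\<in>op_monoid F. h u \<in> J \<longrightarrow> h u \<in> I}"

lemma bot_in_chain_bounds:
  assumes "op_ideal F I" "op_ideal F K"
  shows "bot \<in> chain_bounds I J K"
proof -
  have "h bot \<in> I" if "h \<in> op_monoid F" for h
    using op_monoid_is_operator[OF that] op_ideal_bot[OF assms(1)] by (simp add: is_operator_def)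
  then show ?thesis using op_ideal_bot[OF assms(2)] unfolding chain_bounds_def by blast
qed

lemma chain_bounds_eta_step:
  assumes ideals: "op_ideal F I" "op_ideal F J" "op_ideal F K" and "I \<subseteq> K"
    and u: "u \<in> chain_bounds I J K" "y \<le> u" and step: "(y, y') \<in> eta_of I"
  shows "sup u y' \<in> chain_bounds I J K"
proof -
  obtain i where i: "i \<in> I" "sup y i = sup y' i" using step unfolding eta_of_def by blast
  have "y' \<le> sup y i" using i(2) by simp
  also have "\<dots> \<le> sup u i" using u(2) by (rule sup_mono) simp
  finally have le: "sup u y' \<le> sup u i" by simp
  have "sup u i \<in> K"
    using u(1) i(1) \<open>I \<subseteq> K\<close> op_ideal_sup_iff[OF ideals(3)] unfolding chain_bounds_def by blast
  then have "sup u y' \<in> K" using op_ideal_down[OF ideals(3) le] by blast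
  moreover have "h (sup u y') \<in> I" if h: "h \<in> op_monoid F" and "h (sup u y') \<in> J" for h
  proof -
    have hom: "is_operator h" by (rule op_monoid_is_operator[OF h])
    have "h u \<in> J"
      using op_ideal_down[OF ideals(2) is_operator_mono[OF hom] \<open>h (sup u y') \<in> J\<close>] by simp
    then have "h u \<in> I" using u(1) h unfolding chain_bounds_def by blast
    moreover have "h i \<in> I" using op_ideal_op_monoid[OF ideals(1) h i(1)] .
    ultimately have "h (sup u i) \<in> I"
      using hom op_ideal_sup_iff[OF ideals(1)] unfolding is_operator_def by simp
    then show ?thesis using op_ideal_down[OF ideals(1) is_operator_mono[OF hom le]] by blast
  qed
  ultimately show ?thesis unfolding chain_bounds_def by blast
qed

lemma chain_bounds_tau_step:
  assumes ideals: "op_ideal F I" "op_ideal F J" "op_ideal F K"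
    and tau_le: "tau_of F J \<subseteq> tau_of F K"
    and u: "u \<in> chain_bounds I J K" "y \<le> u" and step: "(y, y') \<in> tau_of F (I \<inter> J)"
  shows "sup u y' \<in> chain_bounds I J K"
proof -
  have cong: "sl_cong F (tau_of F (I \<inter> J))"
    using sl_cong_tau_of op_ideal_Int[OF ideals(1,2)] by blast
  have "(sup u y, sup u y') \<in> tau_of F (I \<inter> J)"
    using sl_cong_sup[OF cong sl_cong_refl[OF cong] step] .
  then have uu': "(u, sup u y') \<in> tau_of F (I \<inter> J)" using u(2) by (simp add: sup.absorb1)
  have mono: "h u \<in> J" if h: "h \<in> op_monoid F" and "h (sup u y') \<in> J" for h
    using op_ideal_down[OF ideals(2) is_operator_mono[OF op_monoid_is_operator[OF h]]] that(2)
    by (meson sup.cobounded1)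
  have forward: "h (sup u y') \<in> I \<inter> J" if h: "h \<in> op_monoid F" and "h u \<in> J" for h
  proof -
    have "h u \<in> I \<inter> J" using that u(1) unfolding chain_bounds_def by blast
    then show ?thesis using uu' h unfolding tau_of_def by blast
  qed
  have "(u, sup u y') \<in> tau_of F J"
    using mono forward unfolding tau_of_def by blast
  then have "id u \<in> K \<longleftrightarrow> id (sup u y') \<in> K"
    using tau_le op_monoid_id[of F] unfolding tau_of_def by blast
  then have "sup u y' \<in> K" using u(1) unfolding chain_bounds_def by simp
  then show ?thesis using mono forward unfolding chain_bounds_def by blast
qed

lemma chain_bounds_rtrancl:
  assumes ideals: "op_ideal F I" "op_ideal F J" "op_ideal F K"
    and "I \<subseteq> K" "tau_of F J \<subseteq> tau_of F K"
    and "(bot, y) \<in> (eta_of I \<union> tau_of F (I \<inter> J))\<^sup>*"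
  shows "\<exists>u\<in>chain_bounds I J K. y \<le> u"
  using assms(6)
proof (induction rule: rtrancl_induct)
  case base
  show ?case using bot_in_chain_bounds[OF ideals(1,3)] by blast
next
  case (step y y')
  then obtain u where u: "u \<in> chain_bounds I J K" "y \<le> u" by blast
  have "sup u y' \<in> chain_bounds I J K"
    using step(2) chain_bounds_eta_step[OF ideals \<open>I \<subseteq> K\<close> u]
      chain_bounds_tau_step[OF ideals \<open>tau_of F J \<subseteq> tau_of F K\<close> u] by blast
  then show ?case by (intro bexI[of _ "sup u y'"]) simp_all
qed

lemma zero_class_cong_join_subset:
  assumes ideals: "op_ideal F I" "op_ideal F J" "op_ideal F K"
    and "I \<subseteq> K" "tau_of F J \<subseteq> tau_of F K"
  shows "zero_class (cong_join F (eta_of I) (tau_of F (I \<inter> J))) \<subseteq> K"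
proof
  let ?R = "eta_of I \<union> tau_of F (I \<inter> J)"
  have cong_eta: "sl_cong F (eta_of I)" and cong_tau: "sl_cong F (tau_of F (I \<inter> J))"
    using sl_cong_eta_of[OF ideals(1)] sl_cong_tau_of[OF op_ideal_Int[OF ideals(1,2)]] .
  fix x assume "x \<in> zero_class (cong_join F (eta_of I) (tau_of F (I \<inter> J)))"
  then have "(x, bot) \<in> ?R\<^sup>*"
    using cong_join_subset_rtrancl[OF cong_eta cong_tau] unfolding zero_class_def by blast
  then have "(bot, x) \<in> ?R\<^sup>*"
    by (rule sl_cong_sym[OF sl_cong_rtrancl_Un[OF cong_eta cong_tau]])
  then obtain u where "u \<in> chain_bounds I J K" "x \<le> u"
    using chain_bounds_rtrancl[OF assms] by blast
  then show "x \<in> K" using op_ideal_down[OF ideals(3)] unfolding chain_bounds_def by blast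
qed

end

theorem theorem6p1:
  fixes F :: "('a::bounded_semilattice_sup_bot \<Rightarrow> 'a) set"
    and \<zeta> \<gamma> \<chi> :: "'a rel"
  assumes "\<forall>f\<in>F. is_operator f"
    and "sl_cong F \<zeta>" and "sl_cong F \<gamma>" and "sl_cong F \<chi>"
    and "eta F \<zeta> \<subseteq> eta F \<gamma>"
    and "tau F \<chi> \<subseteq> tau F \<gamma>"
  shows "eta F (cong_join F (eta F \<zeta>) (tau F (\<zeta> \<inter> \<chi>))) \<subseteq> eta F \<gamma>"
proof -
  interpret semilattice_with_operators F by standard (rule assms(1))
  define I\<^sub>\<zeta> I\<^sub>\<chi> I\<^sub>\<gamma> where "I\<^sub>\<zeta> = zero_class \<zeta>" and "I\<^sub>\<chi> = zero_class \<chi>" and "I\<^sub>\<gamma> = zero_class \<gamma>"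
  have ideals: "op_ideal F I\<^sub>\<zeta>" "op_ideal F I\<^sub>\<chi>" "op_ideal F I\<^sub>\<gamma>"
    unfolding I\<^sub>\<zeta>_def I\<^sub>\<chi>_def I\<^sub>\<gamma>_def using zero_class_op_ideal assms(2-4) by blast+
  have "sl_cong F (\<zeta> \<inter> \<chi>)"
    using sl_cong_Inter[of "{\<zeta>, \<chi>}"] assms(2,4) by auto
  then have eta_tau: "eta F \<zeta> = eta_of I\<^sub>\<zeta>" "eta F \<gamma> = eta_of I\<^sub>\<gamma>"
      "tau F \<chi> = tau_of F I\<^sub>\<chi>" "tau F \<gamma> = tau_of F I\<^sub>\<gamma>"
      "tau F (\<zeta> \<inter> \<chi>) = tau_of F (I\<^sub>\<zeta> \<inter> I\<^sub>\<chi>)"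
    using eta_eq_eta_of tau_eq_tau_of assms(2-4)
    unfolding I\<^sub>\<zeta>_def I\<^sub>\<chi>_def I\<^sub>\<gamma>_def by (simp_all add: zero_class_Int)
  have "I\<^sub>\<zeta> \<subseteq> I\<^sub>\<gamma>"
    using assms(5) zero_class_eta_of[OF ideals(1)] zero_class_eta_of[OF ideals(3)]
    unfolding eta_tau zero_class_def by blast
  moreover have "tau_of F I\<^sub>\<chi> \<subseteq> tau_of F I\<^sub>\<gamma>" using assms(6) unfolding eta_tau .
  ultimately have "zero_class (cong_join F (eta_of I\<^sub>\<zeta>) (tau_of F (I\<^sub>\<zeta> \<inter> I\<^sub>\<chi>))) \<subseteq> I\<^sub>\<gamma>"
    by (rule zero_class_cong_join_subset[OF ideals])
  then show ?thesis
    unfolding eta_tau eta_eq_eta_of[OF sl_cong_cong_join] by (rule eta_of_mono)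
qed

end
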